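(* Let $N\in\mathbb N$, $\lambda_1,\dots,\lambda_N>0$, $\xi_1,\dots,\xi_N\in H^{1/2}(\mathbb R^3)$ (not necessarily distinct), and $m>0$, and suppose the functions $u^{\lambda_1}_{\xi_1,m},\dots,u^{\lambda_N}_{\xi_N,m}$ are nonzero and mutually orthogonal in $L^2(\mathbb R^3\times\mathbb R^3)$. If $m'>0$ satisfies $\frac{|m-m'|}{m'(m+1)}<1$, then $u^{\lambda_1}_{\xi_1,m'},\dots,u^{\lambda_N}_{\xi_N,m'}$ are linearly independent, i.e. they span an $N$-dimensional space.
   Context: For a mass $m>0$ put $\mu_m=\frac{2}{m+1}$. For $\lambda>0$ and $\xi\in H^{1/2}(\mathbb R^3)$, $u^\lambda_{\xi,m}\in L^2(\mathbb R^3\times\mathbb R^3)$ is defined via Fourier transform ($\widehat\phi(p)=(2\pi)^{-d/2}\int e^{-\mathrm ipx}\phi(x)dx$) by $\widehat{u^\lambda_{\xi,m}}(p_1,p_2)=\frac{\widehat\xi(p_1)-\widehat\xi(p_2)}{p_1^2+p_2^2+\mu_m\,p_1\cdot p_2+\lambda}$. *)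

theory Defs
  imports "HOL-Analysis.Analysis"
begin

text \<open>Everything is expressed on the Fourier side. A function xi in H^(1/2)(R^3) is
represented by its Fourier transform xih : R^3 -> C; u^lambda_{xi,m} is represented
by its Fourier transform on R^3 x R^3. By Plancherel, L2 inner products, L2 nullity
and linear (in)dependence are unchanged by the unitary Fourier transform.\<close>

definition mu :: "real \<Rightarrow> real" where
  "mu m = 2 / (m + 1)"

definition H_half_hat :: "(real^3 \<Rightarrow> complex) \<Rightarrow> bool" where
  "H_half_hat xih \<longleftrightarrow> xih \<in> borel_measurable lborel \<and>
     integrable lborel (\<lambda>p. (1 + (norm p)\<^sup>2) powr (1/2) * (cmod (xih p))\<^sup>2)"

definition u_hat :: "real \<Rightarrow> (real^3 \<Rightarrow> complex) \<Rightarrow> real \<Rightarrow> ((real^3) \<times> (real^3)) \<Rightarrow> complex" where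
  "u_hat lam xih m = (\<lambda>(p1, p2). (xih p1 - xih p2) /
      complex_of_real ((p1 \<bullet> p1) + (p2 \<bullet> p2) + mu m * (p1 \<bullet> p2) + lam))"

definition L2_inner :: "((real^3) \<times> (real^3) \<Rightarrow> complex) \<Rightarrow> ((real^3) \<times> (real^3) \<Rightarrow> complex) \<Rightarrow> complex" where
  "L2_inner f g = (\<integral>x. f x * cnj (g x) \<partial>lborel)"

definition L2_nonzero :: "((real^3) \<times> (real^3) \<Rightarrow> complex) \<Rightarrow> bool" where
  "L2_nonzero f \<longleftrightarrow> \<not> (AE x in lborel. f x = 0)"

definition L2_lin_indep :: "nat \<Rightarrow> (nat \<Rightarrow> (real^3) \<times> (real^3) \<Rightarrow> complex) \<Rightarrow> bool" where
  "L2_lin_indep N f \<longleftrightarrow>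
     (\<forall>c :: nat \<Rightarrow> complex. (AE x in lborel. (\<Sum>i<N. c i * f i x) = 0) \<longrightarrow> (\<forall>i<N. c i = 0))"

end

theory Submission
  imports Defs
begin

text \<open>
  Let \<open>K(a, p) = |a|\<^sup>2 + |p|\<^sup>2 + \<mu> a\<cdot>p\<close> with \<open>\<mu> = mu m' \<in> (0, 2)\<close>. If \<open>\<Sum>\<^sub>i c\<^sub>i u\<^sub>i\<close> vanishes
  for the mass \<open>m'\<close>, group the indices by the value of \<open>\<lambda>\<^sub>i\<close> and put
  \<open>W\<^sub>l = \<Sum>\<^bsub>\<lambda>\<^sub>i = l\<^esub> c\<^sub>i \<xi>\<^sub>i\<close>; then \<open>\<Sum>\<^sub>l (W\<^sub>l(a) - W\<^sub>l(p)) / (K(a, p) + l) = 0\<close> almost everywhere.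
  Clearing denominators, the polynomials \<open>P\<^sub>a\<close> of degree \<open>< #L\<close> with coefficients built from
  \<open>W(a)\<close> satisfy \<open>P\<^sub>a(K(a, p)) = P\<^sub>p(K(a, p))\<close>. Taking the divided difference over \<open>#L + 1\<close>
  generic points \<open>a\<close> eliminates the unknown \<open>P\<^sub>p\<close>; after multiplying by \<open>K(q\<^sub>1, p) - K(q\<^sub>2, p)\<close>
  the result is continuous across the hyperplane \<open>K(q\<^sub>1, \<cdot>) = K(q\<^sub>2, \<cdot>)\<close>, and restricting to a
  line in it gives \<open>P\<^sub>q\<^sub>1 = P\<^sub>q\<^sub>2\<close>. So every \<open>W\<^sub>l\<close> is a.e. constant, hence zero as it is square
  integrable. Then \<open>\<Sum>\<^bsub>\<lambda>\<^sub>i = l\<^esub> c\<^sub>i u\<^sub>i\<close> vanishes for the mass \<open>m\<close> as well, and orthogonality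
  of the nonzero \<open>u\<^sub>i\<close> gives \<open>c\<^sub>i = 0\<close>.
\<close>

section \<open>Divided differences and partial fractions\<close>

lemma degree_prod_linear:
  fixes c :: "'b \<Rightarrow> 'a::field"
  assumes "finite I"
  shows "degree (\<Prod>i\<in>I. [:c i, 1:]) = card I"
  by (subst degree_prod_eq_sum_degree) (auto simp: assms)

lemma coeff_prod_linear_card:
  fixes c :: "'b \<Rightarrow> 'a::field"
  assumes "finite I"
  shows "coeff (\<Prod>i\<in>I. [:c i, 1:]) (card I) = 1"
  using lead_coeff_prod[of "\<lambda>i. [:c i, 1:]" I] by (simp add: degree_prod_linear assms)

definition divided_difference :: "'b set \<Rightarrow> ('b \<Rightarrow> 'a::field) \<Rightarrow> ('b \<Rightarrow> 'a) \<Rightarrow> 'a" where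
  "divided_difference J x y = (\<Sum>j\<in>J. y j / (\<Prod>i\<in>J - {j}. x j - x i))"

lemma divided_difference_insert_insert:
  fixes x y :: "'b \<Rightarrow> 'a::field"
  assumes Q: "finite Q" "q1 \<notin> Q" "q2 \<notin> Q" "q1 \<noteq> q2" and "x q1 \<noteq> x q2" "y q2 = 0"
  shows "(x q1 - x q2) * divided_difference (insert q2 (insert q1 Q)) x y =
    y q1 / (\<Prod>i\<in>Q. x q1 - x i) +
    (x q1 - x q2) * (\<Sum>j\<in>Q. y j / (\<Prod>i\<in>insert q2 (insert q1 Q) - {j}. x j - x i))"
proof -
  have "insert q2 (insert q1 Q) - {q1} = insert q2 Q"
    using Q by auto
  then have "(\<Prod>i\<in>insert q2 (insert q1 Q) - {q1}. x q1 - x i) = (x q1 - x q2) * (\<Prod>i\<in>Q. x q1 - x i)"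
    using Q by simp
  then show ?thesis
    using assms by (simp add: divided_difference_def distrib_left)
qed

text \<open>Since \<open>P\<close> is its own Lagrange interpolant on the nodes, the divided difference, which is the
  coefficient of degree \<open>card J - 1\<close> of that interpolant, vanishes.\<close>
lemma divided_difference_poly_eq_0:
  fixes x :: "'b \<Rightarrow> 'a::field" and P :: "'a poly"
  assumes J: "finite J" and inj: "inj_on x J" and deg: "degree P + 2 \<le> card J"
  shows "divided_difference J x (\<lambda>j. poly P (x j)) = 0"
proof -
  define n where "n = card J - 1"
  define D where "D j = (\<Prod>i\<in>J - {j}. x j - x i)" for j
  define B where "B j = (\<Prod>i\<in>J - {j}. [:- x i, 1:])" for j
  define L where "L = (\<Sum>j\<in>J. smult (poly P (x j) / D j) (B j))"
  have card_J: "card (J - {j}) = n" if "j \<in> J" for j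
    using that J by (simp add: n_def)
  have degree_L: "degree L \<le> n"
    unfolding L_def
  proof (rule degree_sum_le[OF J])
    fix j assume "j \<in> J"
    then show "degree (smult (poly P (x j) / D j) (B j)) \<le> n"
      using degree_smult_le[of _ "B j"] card_J J by (simp add: B_def degree_prod_linear)
  qed
  have poly_L: "poly L (x z) = poly P (x z)" if z: "z \<in> J" for z
  proof -
    have B_z: "poly (B j) (x z) = (if j = z then D z else 0)" if "j \<in> J" for j
      using that z J unfolding B_def D_def by (auto simp: poly_prod intro: prod_zero)
    have "D z \<noteq> 0"
      using z inj J unfolding D_def by (auto simp: inj_on_def)
    then show ?thesis
      using z J by (simp add: L_def poly_sum B_z if_distrib cong: if_cong)
  qed
  have card_image: "card (x ` J) = n + 1"
    using card_image[OF inj] deg by (simp add: n_def)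
  have "L = P"
    by (rule poly_eqI_degree[of "x ` J"]) (use poly_L degree_L card_image deg in \<open>auto simp: n_def\<close>)
  have "coeff (B j) n = 1" if "j \<in> J" for j
    using coeff_prod_linear_card[of "J - {j}"] card_J[OF that] J by (simp add: B_def)
  then have "coeff L n = divided_difference J x (\<lambda>j. poly P (x j))"
    by (simp add: L_def coeff_sum D_def divided_difference_def)
  also have "coeff L n = 0"
    using \<open>L = P\<close> deg by (intro coeff_eq_0) (simp add: n_def)
  finally show ?thesis ..
qed

definition partial_fraction_numerator :: "real set \<Rightarrow> (real \<Rightarrow> 'a::real_field) \<Rightarrow> 'a poly" where
  "partial_fraction_numerator L v = (\<Sum>l\<in>L. smult (v l) (\<Prod>k\<in>L - {l}. [:of_real k, 1:]))"

lemma degree_partial_fraction_numerator: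
  assumes "finite L"
  shows "degree (partial_fraction_numerator L v) \<le> card L - 1"
  unfolding partial_fraction_numerator_def
proof (rule degree_sum_le[OF assms])
  fix l assume "l \<in> L"
  then show "degree (smult (v l) (\<Prod>k\<in>L - {l}. [:of_real k, 1:])) \<le> card L - 1"
    using assms degree_smult_le[of "v l" "\<Prod>k\<in>L - {l}. [:of_real k, 1:]"]
    by (simp add: degree_prod_linear)
qed

lemma poly_partial_fraction_numerator:
  assumes "finite L" and "\<And>k. k \<in> L \<Longrightarrow> x + of_real k \<noteq> 0"
  shows "poly (partial_fraction_numerator L v) x = (\<Prod>k\<in>L. x + of_real k) * (\<Sum>l\<in>L. v l / (x + of_real l))"
proof -
  have "v l * (\<Prod>k\<in>L - {l}. x + of_real k) = (\<Prod>k\<in>L. x + of_real k) * (v l / (x + of_real l))"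
    if "l \<in> L" for l
    using assms that by (simp add: prod.remove field_simps)
  then show ?thesis
    by (simp add: partial_fraction_numerator_def poly_sum poly_prod add.commute sum_distrib_left)
qed

lemma poly_partial_fraction_numerator_eq:
  assumes "finite L" and "\<And>k. k \<in> L \<Longrightarrow> x + of_real k \<noteq> 0"
    and "(\<Sum>l\<in>L. (v l - w l) / (x + of_real l)) = 0"
  shows "poly (partial_fraction_numerator L v) x = poly (partial_fraction_numerator L w) x"
  using assms by (simp add: poly_partial_fraction_numerator diff_divide_distrib sum_subtractf)

lemma partial_fraction_numerator_inject:
  assumes L: "finite L" and eq: "partial_fraction_numerator L v = partial_fraction_numerator L w"
    and l: "l \<in> L"
  shows "v l = w l"
proof -
  have value_at_pole: "poly (partial_fraction_numerator L u) (- of_real l) =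
      u l * (\<Prod>k\<in>L - {l}. of_real k - of_real l)" for u :: "real \<Rightarrow> 'a"
  proof -
    have "(\<Prod>k\<in>L - {j}. of_real k - of_real l :: 'a) = 0" if "j \<in> L - {l}" for j
      using that l L by (intro prod_zero) auto
    then have "(\<Sum>j\<in>L - {l}. u j * (\<Prod>k\<in>L - {j}. of_real k - of_real l)) = 0"
      by simp
    then show ?thesis
      using L l by (simp add: partial_fraction_numerator_def poly_sum poly_prod sum.remove)
  qed
  have "(\<Prod>k\<in>L - {l}. of_real k - of_real l :: 'a) \<noteq> 0"
    using L by (auto simp: prod_zero_iff)
  then show ?thesis
    using value_at_pole[of v] value_at_pole[of w] eq by simp
qed

section \<open>The kinetic form\<close>

definition kinetic_form :: "real \<Rightarrow> 'a::real_inner \<Rightarrow> 'a \<Rightarrow> real" where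
  "kinetic_form \<mu> a p = a \<bullet> a + p \<bullet> p + \<mu> * (a \<bullet> p)"

lemma u_hat_eq_kinetic_form:
  "u_hat lam \<xi> m x = (\<xi> (fst x) - \<xi> (snd x)) / of_real (kinetic_form (mu m) (fst x) (snd x) + lam)"
  by (cases x) (simp add: u_hat_def kinetic_form_def)

lemma mu_bounds: "m > 0 \<Longrightarrow> 0 < mu m \<and> mu m < 2"
  unfolding mu_def by (simp add: field_simps)

lemma kinetic_form_lower_bound:
  assumes "0 \<le> \<mu>" "\<mu> \<le> 2"
  shows "(1 - \<mu>/2) * (a \<bullet> a + p \<bullet> p) \<le> kinetic_form \<mu> a p"
proof -
  have "0 \<le> (a + p) \<bullet> (a + p)" by simp
  then have "0 \<le> a \<bullet> a + p \<bullet> p + 2 * (a \<bullet> p)"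
    by (simp add: inner_add_left inner_add_right inner_commute)
  then have "0 \<le> (\<mu>/2) * (a \<bullet> a + p \<bullet> p + 2 * (a \<bullet> p))"
    using assms by simp
  then show ?thesis
    unfolding kinetic_form_def by (simp add: algebra_simps)
qed

lemma kinetic_form_nonneg:
  assumes "0 \<le> \<mu>" "\<mu> \<le> 2"
  shows "0 \<le> kinetic_form \<mu> a p"
proof -
  have "0 \<le> (1 - \<mu>/2) * (a \<bullet> a + p \<bullet> p)"
    using assms by simp
  then show ?thesis
    using kinetic_form_lower_bound[OF assms] by (rule order_trans)
qed

lemma kinetic_form_diff:
  "kinetic_form \<mu> a p - kinetic_form \<mu> b p = a \<bullet> a - b \<bullet> b + \<mu> * ((a - b) \<bullet> p)"
  unfolding kinetic_form_def by (simp add: inner_diff_left algebra_simps)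

section \<open>Lebesgue null sets\<close>

lemma null_sets_hyperplane:
  fixes a :: "'a::euclidean_space"
  assumes "a \<noteq> 0"
  shows "{x. a \<bullet> x = b} \<in> null_sets lborel"
proof -
  have "{x. a \<bullet> x = b} \<in> null_sets lebesgue"
    using negligible_hyperplane[of a b] assms by (simp add: negligible_iff_null_sets)
  moreover have "{x. a \<bullet> x = b} \<in> sets lborel" by measurable
  ultimately show ?thesis using null_sets_completion_iff by blast
qed

lemma AE_inj_on_kinetic_form:
  fixes J :: "'a::euclidean_space set"
  assumes "finite J" and "\<mu> \<noteq> 0"
  shows "AE p in lborel. inj_on (\<lambda>j. kinetic_form \<mu> j p) J"
proof -
  have "AE p in lborel. kinetic_form \<mu> i p \<noteq> kinetic_form \<mu> j p" if "i \<noteq> j" for i j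
  proof -
    have "{p. kinetic_form \<mu> i p = kinetic_form \<mu> j p} = {p. (\<mu> *\<^sub>R (i - j)) \<bullet> p = j \<bullet> j - i \<bullet> i}"
      by (auto simp: kinetic_form_def inner_diff_left algebra_simps)
    then show ?thesis
      using null_sets_hyperplane[of "\<mu> *\<^sub>R (i - j)" "j \<bullet> j - i \<bullet> i"] that assms(2)
      by (auto intro: AE_I' [of "{p. kinetic_form \<mu> i p = kinetic_form \<mu> j p}"])
  qed
  then have "AE p in lborel. \<forall>i\<in>J. \<forall>j\<in>J. i \<noteq> j \<longrightarrow> kinetic_form \<mu> i p \<noteq> kinetic_form \<mu> j p"
    by (intro AE_finite_allI assms(1)) (auto simp: eventually_mono)
  then show ?thesis
    by eventually_elim (auto simp: inj_on_def)
qed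

lemma infinite_inner_image_outside_null:
  fixes u :: "'a::euclidean_space"
  assumes u: "u \<noteq> 0" and N: "N \<in> null_sets lborel"
  shows "infinite ((\<lambda>q. u \<bullet> q) ` (UNIV - N))"
proof
  assume "finite ((\<lambda>q. u \<bullet> q) ` (UNIV - N))"
  then have "N \<union> (\<Union>s\<in>(\<lambda>q. u \<bullet> q) ` (UNIV - N). {x. u \<bullet> x = s}) \<in> null_sets lborel"
    using N by (intro null_sets.Un null_sets_UN' countable_finite null_sets_hyperplane u) auto
  moreover have "N \<union> (\<Union>s\<in>(\<lambda>q. u \<bullet> q) ` (UNIV - N). {x. u \<bullet> x = s}) = UNIV"
    by auto
  ultimately show False
    by (auto simp: null_sets_def)
qed

lemma exists_nodes_outside_null:
  fixes u :: "'a::euclidean_space"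
  assumes u: "u \<noteq> 0" and N: "N \<in> null_sets lborel" and T: "finite T"
  obtains Q where "finite Q" "card Q = n" "Q \<inter> N = {}"
    "inj_on (\<lambda>q. u \<bullet> q) Q" "\<And>q. q \<in> Q \<Longrightarrow> u \<bullet> q \<notin> T"
proof -
  have "infinite ((\<lambda>q. u \<bullet> q) ` (UNIV - N) - T)"
    using infinite_inner_image_outside_null[OF u N] T by simp
  then obtain V where V: "finite V" "card V = n" "V \<subseteq> (\<lambda>q. u \<bullet> q) ` (UNIV - N) - T"
    using infinite_arbitrarily_large by blast
  then have "\<forall>s\<in>V. \<exists>q. q \<notin> N \<and> u \<bullet> q = s" by auto
  then obtain g where g: "\<And>s. s \<in> V \<Longrightarrow> g s \<notin> N \<and> u \<bullet> g s = s" by metis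
  then have "inj_on g V" by (metis inj_onI)
  with V g show ?thesis
    by (intro that[of "g ` V"]) (auto simp: card_image inj_on_def)
qed

lemma isCont_AE_eq_0_imp_eq_0:
  fixes f :: "'a::euclidean_space \<Rightarrow> 'b::real_normed_vector"
  assumes ae: "AE p in lborel. f p = 0" and cont: "isCont f p0"
  shows "f p0 = 0"
proof (rule ccontr)
  assume "f p0 \<noteq> 0"
  then obtain e where e: "e > 0" "\<And>y. dist p0 y < e \<Longrightarrow> f y \<noteq> 0"
    using continuous_at_avoid[OF cont] by blast
  have "AE p in lborel. p \<notin> ball p0 e"
    using ae by eventually_elim (use e in auto)
  then have "ball p0 e \<in> null_sets lborel"
    by (subst AE_iff_null_sets) auto
  moreover have "measure lborel (ball p0 e) > 0"
    using e(1) by (rule content_ball_pos)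
  ultimately show False
    by (simp add: null_sets_def measure_def)
qed

section \<open>Uniqueness for the partial fraction equation\<close>

lemma kinetic_form_eq_on_line:
  fixes q1 q2 u :: "'a::real_inner"
  assumes "\<mu> \<noteq> 0" "q1 \<noteq> q2" "u \<bullet> q1 = u \<bullet> q2"
  obtains p0 where "\<And>t. kinetic_form \<mu> q1 (p0 + t *\<^sub>R u) = kinetic_form \<mu> q2 (p0 + t *\<^sub>R u)"
proof
  define d where "d = q1 - q2"
  define \<alpha> where "\<alpha> = (q2 \<bullet> q2 - q1 \<bullet> q1) / (\<mu> * (d \<bullet> d))"
  have "d \<bullet> u = u \<bullet> q1 - u \<bullet> q2"
    by (metis d_def inner_commute inner_diff_right)
  then have "d \<bullet> d \<noteq> 0" "d \<bullet> u = 0"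
    using assms by (simp_all add: d_def)
  then have "\<mu> * (d \<bullet> (\<alpha> *\<^sub>R d + t *\<^sub>R u)) = q2 \<bullet> q2 - q1 \<bullet> q1" for t
    using assms(1) by (simp add: \<alpha>_def inner_add_right)
  then show "kinetic_form \<mu> q1 (\<alpha> *\<^sub>R d + t *\<^sub>R u) = kinetic_form \<mu> q2 (\<alpha> *\<^sub>R d + t *\<^sub>R u)" for t
    using kinetic_form_diff[of \<mu> q1 "\<alpha> *\<^sub>R d + t *\<^sub>R u" q2] by (simp add: d_def)
qed

lemma finite_kinetic_form_coincidences_on_line:
  assumes "\<mu> \<noteq> 0" "u \<bullet> a \<noteq> u \<bullet> b"
  shows "finite {t. kinetic_form \<mu> a (p0 + t *\<^sub>R u) = kinetic_form \<mu> b (p0 + t *\<^sub>R u)}"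
proof -
  define c where "c = a \<bullet> a - b \<bullet> b + \<mu> * ((a - b) \<bullet> p0)"
  define s where "s = \<mu> * (u \<bullet> a - u \<bullet> b)"
  have "s \<noteq> 0" using assms by (simp add: s_def)
  have "kinetic_form \<mu> a (p0 + t *\<^sub>R u) - kinetic_form \<mu> b (p0 + t *\<^sub>R u) = c + t * s" for t
    unfolding kinetic_form_diff c_def s_def
    by (simp add: inner_add_right inner_diff_left inner_commute algebra_simps)
  then have "{t. kinetic_form \<mu> a (p0 + t *\<^sub>R u) = kinetic_form \<mu> b (p0 + t *\<^sub>R u)} \<subseteq> {- c / s}"
    using \<open>s \<noteq> 0\<close> by (auto simp: field_simps)
  then show ?thesis by (rule finite_subset) simp
qed

lemma poly_kinetic_form_on_line_eq_0:
  fixes R :: "complex poly" and u :: "'a::real_inner"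
  assumes u: "u \<noteq> 0" and T: "finite T"
    and zeros: "\<And>t. t \<notin> T \<Longrightarrow> poly R (of_real (kinetic_form \<mu> a (p0 + t *\<^sub>R u))) = 0"
  shows "R = 0"
proof -
  define Q where "Q = [:of_real (kinetic_form \<mu> a p0), of_real (2 * (p0 \<bullet> u) + \<mu> * (a \<bullet> u)),
    of_real (u \<bullet> u) :: complex:]"
  have Q: "poly Q (of_real t) = of_real (kinetic_form \<mu> a (p0 + t *\<^sub>R u))" for t
    by (simp add: Q_def kinetic_form_def inner_add_left inner_add_right inner_commute algebra_simps
        power2_eq_square)
  have "degree Q > 0" using u by (simp add: Q_def)
  have "of_real ` (UNIV - T) \<subseteq> {z. poly (pcompose R Q) z = 0}"
    using zeros by (auto simp: poly_pcompose Q)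
  moreover have "infinite (of_real ` (UNIV - T) :: complex set)"
    using T by (subst finite_image_iff) (auto simp: inj_on_def Diff_infinite_finite infinite_UNIV_char_0)
  ultimately have "pcompose R Q = 0"
    using poly_roots_finite finite_subset by blast
  then show ?thesis
    using pcompose_eq_0[OF _ \<open>degree Q > 0\<close>] by blast
qed

lemma kinetic_form_bisector_line:
  fixes A :: "'a::real_inner set"
  assumes \<mu>: "\<mu> \<noteq> 0" and q: "q1 \<noteq> q2" "u \<bullet> q1 = u \<bullet> q2"
    and A: "finite A" "inj_on (\<lambda>q. u \<bullet> q) A"
  obtains p0 T where "finite T"
    "\<And>t. kinetic_form \<mu> q1 (p0 + t *\<^sub>R u) = kinetic_form \<mu> q2 (p0 + t *\<^sub>R u)"
    "\<And>t. t \<notin> T \<Longrightarrow> inj_on (\<lambda>j. kinetic_form \<mu> j (p0 + t *\<^sub>R u)) A"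
proof -
  obtain p0 where p0: "\<And>t. kinetic_form \<mu> q1 (p0 + t *\<^sub>R u) = kinetic_form \<mu> q2 (p0 + t *\<^sub>R u)"
    using kinetic_form_eq_on_line[OF \<mu> q] by blast
  define T where "T = (\<Union>a\<in>A. \<Union>b\<in>A - {a}.
    {t. kinetic_form \<mu> a (p0 + t *\<^sub>R u) = kinetic_form \<mu> b (p0 + t *\<^sub>R u)})"
  have "finite T"
    unfolding T_def using A
    by (intro finite_UN_I finite_kinetic_form_coincidences_on_line \<mu>) (auto simp: inj_on_def)
  moreover have "inj_on (\<lambda>j. kinetic_form \<mu> j (p0 + t *\<^sub>R u)) A" if "t \<notin> T" for t
    using that by (auto simp: T_def inj_on_def)
  ultimately show ?thesis
    using p0 that by blast
qed

lemma divided_difference_kinetic_form_AE_eq_0_imp_eq_0: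
  fixes R :: "'a::euclidean_space \<Rightarrow> complex poly"
  assumes \<mu>: "\<mu> \<noteq> 0" and A: "finite A" "q1 \<in> A" "q2 \<notin> A"
    and u: "u \<noteq> 0" "u \<bullet> q1 = u \<bullet> q2" "inj_on (\<lambda>q. u \<bullet> q) A"
    and R: "R q2 = 0"
    and ae: "AE p in lborel. inj_on (\<lambda>j. kinetic_form \<mu> j p) (insert q2 A) \<longrightarrow>
      divided_difference (insert q2 A) (\<lambda>j. of_real (kinetic_form \<mu> j p))
        (\<lambda>j. poly (R j) (of_real (kinetic_form \<mu> j p))) = 0"
  shows "R q1 = 0"
proof -
  define J where "J = insert q2 A"
  define Q where "Q = A - {q1}"
  define x where "x j p = (of_real (kinetic_form \<mu> j p) :: complex)" for j p :: 'a
  txt \<open>Multiplying the divided difference by \<open>x q1 - x q2\<close> removes its pole on the bisector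
    \<open>x q1 = x q2\<close>; there the resulting \<open>\<Phi>\<close> is continuous and a nonzero multiple of
    \<open>poly (R q1) (x q1 p)\<close>.\<close>
  define \<Phi> where "\<Phi> p = poly (R q1) (x q1 p) / (\<Prod>i\<in>Q. x q1 p - x i p)
      + (x q1 p - x q2 p) * (\<Sum>j\<in>Q. poly (R j) (x j p) / (\<Prod>i\<in>J - {j}. x j p - x i p))" for p
  have Q: "finite Q" "q1 \<notin> Q" "q2 \<notin> Q" "q1 \<noteq> q2" and J: "J = insert q2 (insert q1 Q)"
    using A by (auto simp: Q_def J_def)
  have "AE p in lborel. inj_on (\<lambda>j. kinetic_form \<mu> j p) J"
    using AE_inj_on_kinetic_form[OF _ \<mu>, of J] A by (simp only: J_def finite_insert)
  then have "AE p in lborel. \<Phi> p = 0"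
    using ae unfolding J_def[symmetric]
  proof eventually_elim
    case (elim p)
    then have "x q1 p \<noteq> x q2 p"
      using Q by (auto simp: x_def J inj_on_def)
    with elim show ?case
      using divided_difference_insert_insert[OF Q, of "\<lambda>j. x j p" "\<lambda>j. poly (R j) (x j p)"] R
      by (simp add: \<Phi>_def J x_def)
  qed
  obtain T p0 where "finite T"
    and bisector: "\<And>t. kinetic_form \<mu> q1 (p0 + t *\<^sub>R u) = kinetic_form \<mu> q2 (p0 + t *\<^sub>R u)"
    and distinct: "\<And>t. t \<notin> T \<Longrightarrow> inj_on (\<lambda>j. kinetic_form \<mu> j (p0 + t *\<^sub>R u)) A"
    using kinetic_form_bisector_line[OF \<mu> Q(4) u(2) A(1) u(3)] by metis
  have roots: "poly (R q1) (x q1 (p0 + t *\<^sub>R u)) = 0" if "t \<notin> T" for t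
  proof -
    define p where "p = p0 + t *\<^sub>R u"
    have distinct_p: "x a p \<noteq> x b p" if "a \<in> A" "b \<in> A" "a \<noteq> b" for a b
      using inj_on_eq_iff[OF distinct[OF \<open>t \<notin> T\<close>] that(1,2)] that(3) by (simp add: x_def p_def)
    have "x q1 p = x q2 p" using bisector by (simp add: p_def x_def)
    then have "x j p \<noteq> x i p" if "j \<in> Q" "i \<in> J - {j}" for i j
      using that distinct_p[of j i] distinct_p[of j q1] A by (auto simp: J Q_def)
    then have nonzero: "(\<Prod>i\<in>J - {j}. x j p - x i p) \<noteq> 0" if "j \<in> Q" for j
      using that Q J by auto
    have nonzero_q1: "(\<Prod>i\<in>Q. x q1 p - x i p) \<noteq> 0"
      using Q distinct_p[of q1] A by (auto simp: Q_def)
    have "isCont \<Phi> p"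
      using nonzero nonzero_q1 unfolding \<Phi>_def x_def kinetic_form_def
      by (intro continuous_intros) auto
    then have "\<Phi> p = 0"
      using \<open>AE p in lborel. \<Phi> p = 0\<close> isCont_AE_eq_0_imp_eq_0 by blast
    then show ?thesis
      using \<open>x q1 p = x q2 p\<close> nonzero_q1 by (simp add: \<Phi>_def p_def)
  qed
  show ?thesis
    by (rule poly_kinetic_form_on_line_eq_0[OF u(1) \<open>finite T\<close>]) (use roots in \<open>simp add: x_def\<close>)
qed

lemma AE_divided_difference_partial_fraction_numerator_eq_0:
  fixes W :: "'a::euclidean_space \<Rightarrow> real \<Rightarrow> complex"
  assumes \<mu>: "0 \<le> \<mu>" "\<mu> \<le> 2" and L: "finite L" "\<And>l. l \<in> L \<Longrightarrow> 0 < l"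
    and J: "finite J" "card L < card J" and S: "degree S < card L"
    and eq: "\<And>j. j \<in> J \<Longrightarrow> AE p in lborel.
      (\<Sum>l\<in>L. (W j l - W p l) / of_real (kinetic_form \<mu> j p + l)) = 0"
  shows "AE p in lborel. inj_on (\<lambda>j. kinetic_form \<mu> j p) J \<longrightarrow>
    divided_difference J (\<lambda>j. of_real (kinetic_form \<mu> j p))
      (\<lambda>j. poly (partial_fraction_numerator L (W j) - S) (of_real (kinetic_form \<mu> j p))) = 0"
proof -
  define x where "x j p = (of_real (kinetic_form \<mu> j p) :: complex)" for j p :: 'a
  have "AE p in lborel. \<forall>j\<in>J. (\<Sum>l\<in>L. (W j l - W p l) / of_real (kinetic_form \<mu> j p + l)) = 0"
    using J(1) eq by (rule AE_finite_allI)
  then show ?thesis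
    unfolding x_def[symmetric]
  proof eventually_elim
    case (elim p)
    have "x j p + of_real k \<noteq> 0" if "k \<in> L" for j k
      using kinetic_form_nonneg[OF \<mu>, of j p] L(2)[OF that] unfolding x_def
      by (metis add_nonneg_pos less_irrefl of_real_add of_real_eq_0_iff)
    then have same: "poly (partial_fraction_numerator L (W j) - S) (x j p) =
        poly (partial_fraction_numerator L (W p) - S) (x j p)" if "j \<in> J" for j
      using elim that L(1) unfolding x_def by (simp add: poly_partial_fraction_numerator_eq)
    have "degree (partial_fraction_numerator L (W p) - S) + 2 \<le> card J"
      using degree_diff_le[OF degree_partial_fraction_numerator[OF L(1)] _, of S "W p"] J(2) S
      by arith
    show ?case
    proof
      assume "inj_on (\<lambda>j. kinetic_form \<mu> j p) J"
      then have "inj_on (\<lambda>j. x j p) J"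
        by (simp add: x_def inj_on_def)
      have "divided_difference J (\<lambda>j. x j p) (\<lambda>j. poly (partial_fraction_numerator L (W j) - S) (x j p)) =
          divided_difference J (\<lambda>j. x j p) (\<lambda>j. poly (partial_fraction_numerator L (W p) - S) (x j p))"
        unfolding divided_difference_def using same by (intro sum.cong) auto
      also have "\<dots> = 0"
        by (rule divided_difference_poly_eq_0) fact+
      finally show "divided_difference J (\<lambda>j. x j p)
          (\<lambda>j. poly (partial_fraction_numerator L (W j) - S) (x j p)) = 0" .
    qed
  qed
qed

lemma exists_bisector_nodes:
  fixes q1 q2 :: "'a::euclidean_space"
  assumes dim: "2 \<le> DIM('a)" and N: "N \<in> null_sets lborel" and q: "q1 \<notin> N" "q1 \<noteq> q2"
  obtains u A where "u \<noteq> 0" "u \<bullet> q1 = u \<bullet> q2" "finite A" "q1 \<in> A" "q2 \<notin> A"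
    "inj_on (\<lambda>q. u \<bullet> q) A" "card A = Suc n" "A \<inter> N = {}"
proof -
  obtain u where u: "u \<noteq> 0" "orthogonal (q1 - q2) u"
    using orthogonal_to_vector_exists[OF dim] by blast
  then have u_q: "u \<bullet> q1 = u \<bullet> q2"
    by (metis eq_iff_diff_eq_0 inner_commute inner_diff_left orthogonal_def)
  obtain Q where Q: "finite Q" "card Q = n" "Q \<inter> N = {}"
    "inj_on (\<lambda>q. u \<bullet> q) Q" "\<And>q. q \<in> Q \<Longrightarrow> u \<bullet> q \<notin> {u \<bullet> q1}"
    using exists_nodes_outside_null[OF u(1) N, of "{u \<bullet> q1}"] by blast
  have "q1 \<notin> Q"
    using Q(5) by blast
  have "q2 \<notin> Q"
    using Q(5) u_q by (metis singletonI)
  have "inj_on (\<lambda>q. u \<bullet> q) (insert q1 Q)"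
    using Q(4,5) \<open>q1 \<notin> Q\<close> by (subst inj_on_insert) (simp add: image_iff, metis)
  then show ?thesis
    using that[of u "insert q1 Q"] u(1) u_q Q(1-3) q \<open>q1 \<notin> Q\<close> \<open>q2 \<notin> Q\<close> by auto
qed

lemma partial_fraction_kinetic_form_eq:
  fixes W :: "'a::euclidean_space \<Rightarrow> real \<Rightarrow> complex"
  assumes dim: "2 \<le> DIM('a)" and \<mu>: "0 < \<mu>" "\<mu> < 2"
    and L: "finite L" "\<And>l. l \<in> L \<Longrightarrow> 0 < l"
    and N: "N \<in> null_sets lborel"
    and eq: "\<And>a. a \<notin> N \<Longrightarrow> AE p in lborel.
      (\<Sum>l\<in>L. (W a l - W p l) / of_real (kinetic_form \<mu> a p + l)) = 0"
    and q: "q1 \<notin> N" "q2 \<notin> N" and l: "l \<in> L"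
  shows "W q1 l = W q2 l"
proof (cases "q1 = q2")
  case False
  have "L \<noteq> {}" using l by blast
  then have "card L > 0"
    using L(1) by (simp add: card_gt_0_iff)
  obtain u A where u: "u \<noteq> 0" and u_q: "u \<bullet> q1 = u \<bullet> q2"
    and A: "finite A" "q1 \<in> A" "q2 \<notin> A" "inj_on (\<lambda>q. u \<bullet> q) A"
    and card_A: "card A = Suc (card L - 1)" and A_N: "A \<inter> N = {}"
    using exists_bisector_nodes[OF dim N q(1) False] by metis
  define J where "J = insert q2 A"
  have "finite J" "card L < card J"
    using A card_A \<open>card L > 0\<close> by (simp_all add: J_def)
  have eq_J: "AE p in lborel. (\<Sum>l\<in>L. (W j l - W p l) / of_real (kinetic_form \<mu> j p + l)) = 0"
    if "j \<in> J" for j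
    using that q(2) A_N by (intro eq) (auto simp: J_def)
  define x where "x j p = (of_real (kinetic_form \<mu> j p) :: complex)" for j p :: 'a
  define P where "P j = partial_fraction_numerator L (W j)" for j
  have degree_P: "degree (P q2) < card L"
    using degree_partial_fraction_numerator[OF L(1), of "W q2"] \<open>card L > 0\<close>
    unfolding P_def by arith
  have ae: "AE p in lborel. inj_on (\<lambda>j. kinetic_form \<mu> j p) J \<longrightarrow>
      divided_difference J (\<lambda>j. x j p) (\<lambda>j. poly (P j - P q2) (x j p)) = 0"
    using AE_divided_difference_partial_fraction_numerator_eq_0[OF less_imp_le[OF \<mu>(1)]
        less_imp_le[OF \<mu>(2)] L(1) L(2) \<open>finite J\<close> \<open>card L < card J\<close> degree_P[unfolded P_def] eq_J]
    unfolding x_def P_def .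
  have "P q1 - P q2 = 0"
    by (rule divided_difference_kinetic_form_AE_eq_0_imp_eq_0[OF _ A(1-3) u u_q A(4) _
        ae[unfolded J_def x_def]]) (use \<mu> in simp_all)
  then show ?thesis
    using partial_fraction_numerator_inject[OF L(1) _ l] by (simp add: P_def)
qed simp

lemma AE_partial_fraction_kinetic_form_eq_imp_constant:
  fixes W :: "'a::euclidean_space \<Rightarrow> real \<Rightarrow> complex"
  assumes dim: "2 \<le> DIM('a)" and \<mu>: "0 < \<mu>" "\<mu> < 2"
    and L: "finite L" "\<And>l. l \<in> L \<Longrightarrow> 0 < l"
    and eq: "AE a in lborel. AE p in lborel.
      (\<Sum>l\<in>L. (W a l - W p l) / of_real (kinetic_form \<mu> a p + l)) = 0"
  obtains c where "AE p in lborel. \<forall>l\<in>L. W p l = c l"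
proof -
  obtain N where N_sup: "{a \<in> space lborel. \<not> (AE p in lborel.
      (\<Sum>l\<in>L. (W a l - W p l) / of_real (kinetic_form \<mu> a p + l)) = 0)} \<subseteq> N"
    and N_measure: "emeasure lborel N = 0" and "N \<in> sets lborel"
    using eq by (rule AE_E)
  then have N: "N \<in> null_sets lborel" by (simp add: null_sets_def)
  have eq_N: "AE p in lborel. (\<Sum>l\<in>L. (W a l - W p l) / of_real (kinetic_form \<mu> a p + l)) = 0"
    if "a \<notin> N" for a
    using N_sup that by auto
  have "N \<noteq> UNIV"
    using N_measure by auto
  then obtain q0 where "q0 \<notin> N"
    by blast
  have "AE p in lborel. \<forall>l\<in>L. W p l = W q0 l"
    using AE_not_in[OF N]
    by eventually_elim (use partial_fraction_kinetic_form_eq[OF dim \<mu> L N eq_N _ \<open>q0 \<notin> N\<close>] in blast)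
  then show ?thesis ..
qed

section \<open>Square integrability\<close>

lemma nn_integral_one_plus_square_powr_finite:
  "(\<integral>\<^sup>+t. ennreal ((1 + t\<^sup>2) powr (-2/3)) \<partial>lborel) < \<infinity>"
proof -
  define f where "f t = ennreal (t powr (-4/3)) * indicator {1..} t" for t :: real
  have [measurable]: "f \<in> borel_measurable borel"
    unfolding f_def by measurable
  have f_finite: "(\<integral>\<^sup>+t. f t \<partial>lborel) < \<infinity>"
    using nn_integral_has_integral_lebesgue'[OF _ has_integral_powr_to_inf[of "-4/3" 1]]
    by (simp add: f_def)
  have "ennreal ((1 + t\<^sup>2) powr (-2/3)) \<le> indicator {-1..1} t + (f t + f (-t))" for t :: real
  proof (cases "\<bar>t\<bar> \<le> 1")
    case True
    have "(1 + t\<^sup>2) powr (-2/3) \<le> 1 powr (-2/3)"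
      by (rule powr_mono2') auto
    then show ?thesis
      using True by (intro add_increasing2) (auto simp: indicator_def)
  next
    case False
    have "(1 + t\<^sup>2) powr (-2/3) \<le> (\<bar>t\<bar>\<^sup>2) powr (-2/3)"
      using False by (intro powr_mono2') auto
    also have "\<dots> = \<bar>t\<bar> powr (-4/3)"
    proof -
      have "\<bar>t\<bar>\<^sup>2 = \<bar>t\<bar> powr 2"
        using False by (simp add: powr_numeral)
      then show ?thesis
        by (simp only: powr_powr) simp
    qed
    finally show ?thesis
      using False by (cases "t \<ge> 0") (auto simp: f_def add_increasing add_increasing2 ennreal_leI)
  qed
  then have "(\<integral>\<^sup>+t. ennreal ((1 + t\<^sup>2) powr (-2/3)) \<partial>lborel)
      \<le> (\<integral>\<^sup>+t. indicator {-1..1} t + (f t + f (-t)) \<partial>lborel)"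
    by (rule nn_integral_mono)
  also have "\<dots> = emeasure lborel {-1..1::real} + ((\<integral>\<^sup>+t. f t \<partial>lborel) + (\<integral>\<^sup>+t. f (-t) \<partial>lborel))"
    by (simp add: nn_integral_add)
  also have "(\<integral>\<^sup>+t. f (-t) \<partial>lborel) = (\<integral>\<^sup>+t. f t \<partial>lborel)"
    using nn_integral_real_affine[of f "-1" 0] by simp
  also have "emeasure lborel {-1..1::real} + ((\<integral>\<^sup>+t. f t \<partial>lborel) + (\<integral>\<^sup>+t. f t \<partial>lborel)) < \<infinity>"
    using f_finite by (simp add: ennreal_add_less_top)
  finally show ?thesis .
qed

text \<open>The exponent \<open>-2/3\<close> makes each factor integrable on \<open>\<real>\<close> while three factors together
  still decay like \<open>(1 + |q|\<^sup>2)\<^sup>-\<^sup>2\<close>.\<close>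
lemma inverse_square_le_prod_powr:
  fixes q :: "real^3"
  shows "1 / (1 + q \<bullet> q)\<^sup>2 \<le> (\<Prod>b\<in>Basis. (1 + (q \<bullet> b)\<^sup>2) powr (-2/3))"
proof -
  define y where "y = 1 + q \<bullet> q"
  have "y \<ge> 1" by (simp add: y_def)
  have "y powr (-2/3) \<le> (1 + (q \<bullet> b)\<^sup>2) powr (-2/3)" if "b \<in> Basis" for b
  proof -
    have "(q \<bullet> b)\<^sup>2 \<le> (norm q)\<^sup>2"
      using Basis_le_norm[OF that, of q] by (metis abs_ge_zero power2_abs power_mono)
    then have "1 + (q \<bullet> b)\<^sup>2 \<le> y"
      by (simp add: y_def power2_norm_eq_inner)
    then show ?thesis
      by (intro powr_mono2') (auto intro: add_pos_nonneg)
  qed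
  then have "(\<Prod>b\<in>(Basis::(real^3) set). y powr (-2/3)) \<le> (\<Prod>b\<in>Basis. (1 + (q \<bullet> b)\<^sup>2) powr (-2/3))"
    by (intro prod_mono) auto
  moreover have "(\<Prod>b\<in>(Basis::(real^3) set). y powr (-2/3)) = (y powr (-2/3)) ^ 3"
    by simp
  moreover have "(y powr (-2/3)) ^ 3 = y powr (-2)"
    using \<open>y \<ge> 1\<close> by (subst powr_power) auto
  moreover have "y powr (-2) = 1 / y\<^sup>2"
    using \<open>y \<ge> 1\<close> by (simp add: powr_minus powr_numeral divide_inverse)
  ultimately show ?thesis
    by (simp add: y_def)
qed

lemma nn_integral_inverse_square_finite:
  fixes \<kappa> l :: real
  assumes "\<kappa> > 0" "l > 0"
  shows "(\<integral>\<^sup>+q. ennreal (1 / (\<kappa> * (q \<bullet> q) + l)\<^sup>2) \<partial>(lborel :: (real^3) measure)) < \<infinity>"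
proof -
  define c where "c = min \<kappa> l"
  define h where "h t = ennreal ((1 + t\<^sup>2) powr (-2/3))" for t :: real
  have h_measurable [measurable]: "h \<in> borel_measurable borel"
    unfolding h_def by measurable
  have "c > 0" using assms by (simp add: c_def)
  have bound: "ennreal (1 / (\<kappa> * (q \<bullet> q) + l)\<^sup>2) \<le> ennreal (1 / c\<^sup>2) * (\<Prod>b\<in>Basis. h (q \<bullet> b))"
    for q :: "real^3"
  proof -
    have "c * (q \<bullet> q) \<le> \<kappa> * (q \<bullet> q)" "c \<le> l"
      by (auto simp: c_def intro: mult_right_mono)
    then have "c * (1 + q \<bullet> q) \<le> \<kappa> * (q \<bullet> q) + l"
      by (simp add: distrib_left)
    moreover have "0 < c * (1 + q \<bullet> q)"
      using \<open>c > 0\<close> by (simp add: add_pos_nonneg)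
    ultimately have "1 / (\<kappa> * (q \<bullet> q) + l)\<^sup>2 \<le> 1 / (c * (1 + q \<bullet> q))\<^sup>2"
      by (intro divide_left_mono power_mono mult_pos_pos) auto
    also have "\<dots> = (1 / c\<^sup>2) * (1 / (1 + q \<bullet> q)\<^sup>2)"
      by (simp add: power_mult_distrib)
    also have "\<dots> \<le> (1 / c\<^sup>2) * (\<Prod>b\<in>Basis. (1 + (q \<bullet> b)\<^sup>2) powr (-2/3))"
      using inverse_square_le_prod_powr[of q] by (rule mult_left_mono) simp
    finally have "ennreal (1 / (\<kappa> * (q \<bullet> q) + l)\<^sup>2)
        \<le> ennreal ((1 / c\<^sup>2) * (\<Prod>b\<in>Basis. (1 + (q \<bullet> b)\<^sup>2) powr (-2/3)))"
      by (rule ennreal_leI)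
    also have "\<dots> = ennreal (1 / c\<^sup>2) * (\<Prod>b\<in>Basis. h (q \<bullet> b))"
      by (subst ennreal_mult) (simp_all add: h_def prod_ennreal prod_nonneg)
    finally show ?thesis .
  qed
  have "(\<integral>\<^sup>+q. ennreal (1 / (\<kappa> * (q \<bullet> q) + l)\<^sup>2) \<partial>(lborel :: (real^3) measure))
      \<le> (\<integral>\<^sup>+q. ennreal (1 / c\<^sup>2) * (\<Prod>b\<in>Basis. h (q \<bullet> b)) \<partial>(lborel :: (real^3) measure))"
    using bound by (rule nn_integral_mono)
  also have "\<dots> = ennreal (1 / c\<^sup>2) * (\<integral>\<^sup>+q. (\<Prod>b\<in>Basis. h (q \<bullet> b)) \<partial>(lborel :: (real^3) measure))"
    by (rule nn_integral_cmult) measurable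
  also have "(\<integral>\<^sup>+q. (\<Prod>b\<in>Basis. h (q \<bullet> b)) \<partial>(lborel :: (real^3) measure)) = (\<integral>\<^sup>+t. h t \<partial>lborel) ^ 3"
    by (subst nn_integral_lborel_prod) auto
  also have "ennreal (1 / c\<^sup>2) * (\<integral>\<^sup>+t. h t \<partial>lborel) ^ 3 < \<infinity>"
    using nn_integral_one_plus_square_powr_finite
    by (simp add: h_def ennreal_mult_less_top power_less_top_ennreal)
  finally show ?thesis .
qed

lemma nn_integral_lborel_pair_times:
  fixes F :: "'a::euclidean_space \<Rightarrow> ennreal" and G :: "'b::euclidean_space \<Rightarrow> ennreal"
  assumes [measurable]: "F \<in> borel_measurable lborel" "G \<in> borel_measurable lborel"
  shows "(\<integral>\<^sup>+x. F (fst x) * G (snd x) \<partial>lborel) = (\<integral>\<^sup>+a. F a \<partial>lborel) * (\<integral>\<^sup>+b. G b \<partial>lborel)"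
proof -
  have "(\<integral>\<^sup>+x. F (fst x) * G (snd x) \<partial>lborel) = (\<integral>\<^sup>+a. \<integral>\<^sup>+b. F a * G b \<partial>lborel \<partial>lborel)"
    by (subst lborel_prod[symmetric], subst lborel.nn_integral_fst[symmetric]) simp_all
  also have "\<dots> = (\<integral>\<^sup>+a. F a * (\<integral>\<^sup>+b. G b \<partial>lborel) \<partial>lborel)"
    by (simp add: nn_integral_cmult)
  finally show ?thesis
    by (simp add: nn_integral_multc)
qed

lemma borel_measurable_u_hat:
  assumes [measurable]: "\<xi> \<in> borel_measurable lborel"
  shows "u_hat lam \<xi> m \<in> borel_measurable lborel"
proof -
  have "(\<lambda>x. (\<xi> (fst x) - \<xi> (snd x)) / of_real (kinetic_form (mu m) (fst x) (snd x) + lam))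
      \<in> borel_measurable (lborel \<Otimes>\<^sub>M lborel)"
    unfolding kinetic_form_def by measurable
  then show ?thesis
    by (simp only: lborel_prod u_hat_eq_kinetic_form[abs_def])
qed

lemma square_norm_add_le: "(norm (a + b))\<^sup>2 \<le> 2 * (norm a)\<^sup>2 + 2 * (norm b)\<^sup>2"
  for a b :: "'a::real_normed_vector"
proof -
  have "(norm (a + b))\<^sup>2 \<le> (norm a + norm b)\<^sup>2"
    by (simp add: norm_triangle_ineq power_mono)
  also have "\<dots> \<le> 2 * (norm a)\<^sup>2 + 2 * (norm b)\<^sup>2"
    using sum_squares_bound[of "norm a" "norm b"] by (simp add: power2_sum)
  finally show ?thesis .
qed

lemma norm_u_hat_square_le:
  assumes m: "m > 0" and lam: "lam > 0"
  shows "(cmod (u_hat lam \<xi> m (a, p)))\<^sup>2 \<le>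
    2 * (cmod (\<xi> a))\<^sup>2 / ((1 - mu m / 2) * (p \<bullet> p) + lam)\<^sup>2 +
    2 * (cmod (\<xi> p))\<^sup>2 / ((1 - mu m / 2) * (a \<bullet> a) + lam)\<^sup>2"
proof -
  define \<kappa> where "\<kappa> = 1 - mu m / 2"
  define D where "D = kinetic_form (mu m) a p + lam"
  have "\<kappa> > 0" using mu_bounds[OF m] by (simp add: \<kappa>_def)
  have "\<kappa> * (a \<bullet> a + p \<bullet> p) + lam \<le> D"
    using kinetic_form_lower_bound[of "mu m" a p] mu_bounds[OF m] by (simp add: D_def \<kappa>_def)
  moreover have "0 \<le> \<kappa> * (a \<bullet> a)" "0 \<le> \<kappa> * (p \<bullet> p)"
    using \<open>\<kappa> > 0\<close> by simp_all
  ultimately have le_D: "\<kappa> * (p \<bullet> p) + lam \<le> D" "\<kappa> * (a \<bullet> a) + lam \<le> D"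
    by (simp_all add: distrib_left)
  have pos: "0 < \<kappa> * (q \<bullet> q) + lam" for q :: "real^3"
    using \<open>\<kappa> > 0\<close> lam by (simp add: add_nonneg_pos)
  have "1 / D\<^sup>2 \<le> 1 / y\<^sup>2" if "0 < y" "y \<le> D" for y
    using that by (intro frac_le power_mono) auto
  then have "2 * (cmod (\<xi> a))\<^sup>2 * (1 / D\<^sup>2) + 2 * (cmod (\<xi> p))\<^sup>2 * (1 / D\<^sup>2) \<le>
      2 * (cmod (\<xi> a))\<^sup>2 * (1 / (\<kappa> * (p \<bullet> p) + lam)\<^sup>2) +
      2 * (cmod (\<xi> p))\<^sup>2 * (1 / (\<kappa> * (a \<bullet> a) + lam)\<^sup>2)"
    using le_D pos by (intro add_mono mult_left_mono) auto
  moreover have "(cmod (\<xi> a - \<xi> p))\<^sup>2 / D\<^sup>2 \<le> (2 * (cmod (\<xi> a))\<^sup>2 + 2 * (cmod (\<xi> p))\<^sup>2) / D\<^sup>2"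
    using square_norm_add_le[of "\<xi> a" "- \<xi> p"] by (intro divide_right_mono) simp_all
  moreover have "cmod (of_real D) = D"
    using pos[of p] le_D(1) by simp
  then have "(cmod (u_hat lam \<xi> m (a, p)))\<^sup>2 = (cmod (\<xi> a - \<xi> p))\<^sup>2 / D\<^sup>2"
    by (simp only: u_hat_eq_kinetic_form fst_conv snd_conv D_def[symmetric] norm_divide power_divide)
  ultimately show ?thesis
    by (simp add: \<kappa>_def add_divide_distrib)
qed

lemma square_integrable_u_hat:
  assumes m: "m > 0" and lam: "lam > 0"
    and [measurable]: "\<xi> \<in> borel_measurable lborel"
    and \<xi>: "integrable lborel (\<lambda>p. (cmod (\<xi> p))\<^sup>2)"
  shows "integrable lborel (\<lambda>x. (cmod (u_hat lam \<xi> m x))\<^sup>2)"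
proof -
  define g where "g q = 1 / ((1 - mu m / 2) * (q \<bullet> q) + lam)\<^sup>2" for q :: "real^3"
  define F where "F a = 2 * (cmod (\<xi> a))\<^sup>2" for a :: "real^3"
  have [measurable]: "g \<in> borel_measurable lborel" "F \<in> borel_measurable lborel"
    unfolding g_def F_def by measurable
  have "integrable lborel F"
    unfolding F_def using \<xi> by simp
  then have "(\<integral>\<^sup>+a. ennreal (F a) \<partial>lborel) < \<infinity>"
    by (simp add: integrable_iff_bounded F_def)
  moreover have "(\<integral>\<^sup>+q. ennreal (g q) \<partial>lborel) < \<infinity>"
    unfolding g_def using mu_bounds[OF m] lam by (intro nn_integral_inverse_square_finite) auto
  moreover have "(\<integral>\<^sup>+x. ennreal (F (fst x)) * ennreal (g (snd x)) \<partial>lborel) =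
      (\<integral>\<^sup>+a. ennreal (F a) \<partial>lborel) * (\<integral>\<^sup>+q. ennreal (g q) \<partial>lborel)"
    "(\<integral>\<^sup>+x. ennreal (g (fst x)) * ennreal (F (snd x)) \<partial>lborel) =
      (\<integral>\<^sup>+q. ennreal (g q) \<partial>lborel) * (\<integral>\<^sup>+a. ennreal (F a) \<partial>lborel)"
    by (rule nn_integral_lborel_pair_times; measurable)+
  moreover have "(\<integral>\<^sup>+x. ennreal (F (fst x)) * ennreal (g (snd x)) +
      ennreal (g (fst x)) * ennreal (F (snd x)) \<partial>lborel) =
      (\<integral>\<^sup>+x. ennreal (F (fst x)) * ennreal (g (snd x)) \<partial>lborel) +
      (\<integral>\<^sup>+x. ennreal (g (fst x)) * ennreal (F (snd x)) \<partial>lborel)"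
    unfolding lborel_prod[symmetric] by (rule nn_integral_add) measurable
  ultimately have finite: "(\<integral>\<^sup>+x. ennreal (F (fst x)) * ennreal (g (snd x)) +
      ennreal (g (fst x)) * ennreal (F (snd x)) \<partial>lborel) < \<infinity>"
    by (simp add: ennreal_mult_less_top ennreal_add_less_top)
  have "(cmod (u_hat lam \<xi> m (a, p)))\<^sup>2 \<le> F a * g p + g a * F p" for a p
    using norm_u_hat_square_le[OF m lam, of \<xi> a p] by (simp add: F_def g_def)
  then have "(\<integral>\<^sup>+x. ennreal ((cmod (u_hat lam \<xi> m x))\<^sup>2) \<partial>lborel)
      \<le> (\<integral>\<^sup>+x. ennreal (F (fst x)) * ennreal (g (snd x)) +
           ennreal (g (fst x)) * ennreal (F (snd x)) \<partial>lborel)"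
    by (intro nn_integral_mono) (auto simp: F_def g_def ennreal_mult[symmetric]
        ennreal_plus[symmetric] ennreal_leI simp del: ennreal_plus ennreal_mult)
  moreover have "u_hat lam \<xi> m \<in> borel_measurable lborel"
    by (rule borel_measurable_u_hat) measurable
  ultimately show ?thesis
    using finite by (intro integrableI_bounded) auto
qed

lemma square_integrable_sum:
  fixes f :: "'i \<Rightarrow> 'a \<Rightarrow> complex"
  assumes "finite S"
    and "\<And>i. i \<in> S \<Longrightarrow> f i \<in> borel_measurable M"
    and "\<And>i. i \<in> S \<Longrightarrow> integrable M (\<lambda>x. (cmod (f i x))\<^sup>2)"
  shows "integrable M (\<lambda>x. (cmod (\<Sum>i\<in>S. c i * f i x))\<^sup>2)"
  using assms
proof (induction S rule: finite_induct)
  case (insert j S)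
  have [measurable]: "f i \<in> borel_measurable M" if "i \<in> insert j S" for i
    using insert.prems(1) that .
  show ?case
  proof (rule Bochner_Integration.integrable_bound)
    show "integrable M (\<lambda>x. 2 * (cmod (c j * f j x))\<^sup>2 + 2 * (cmod (\<Sum>i\<in>S. c i * f i x))\<^sup>2)"
      using insert by (simp add: norm_mult power_mult_distrib)
    show "(\<lambda>x. (cmod (\<Sum>i\<in>insert j S. c i * f i x))\<^sup>2) \<in> borel_measurable M"
      using insert.prems(1) by measurable
    show "AE x in M. norm ((cmod (\<Sum>i\<in>insert j S. c i * f i x))\<^sup>2)
        \<le> norm (2 * (cmod (c j * f j x))\<^sup>2 + 2 * (cmod (\<Sum>i\<in>S. c i * f i x))\<^sup>2)"
      using insert.hyps by (intro AE_I2) (simp add: square_norm_add_le)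
  qed
qed simp

lemma square_integrable_AE_eq_const_imp_AE_eq_0:
  fixes f :: "'a::euclidean_space \<Rightarrow> complex"
  assumes square: "integrable lborel (\<lambda>p. (cmod (f p))\<^sup>2)" and const: "AE p in lborel. f p = c"
  shows "AE p in lborel. f p = 0"
proof -
  have "AE p in lborel. (cmod (f p))\<^sup>2 = (cmod c)\<^sup>2"
    using const by eventually_elim simp
  then have "integrable (lborel :: 'a measure) (\<lambda>_. (cmod c)\<^sup>2)"
    by (rule integrable_cong_AE_imp[OF square, rotated]) simp
  then have "(\<integral>\<^sup>+x. ennreal ((cmod c)\<^sup>2) \<partial>(lborel :: 'a measure)) < \<infinity>"
    by (simp add: integrable_iff_bounded)
  then have "c = 0"
    by (simp add: nn_integral_const ennreal_mult_less_top)
  then show ?thesis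
    using const by simp
qed

lemma integrable_mult_cnj:
  assumes [measurable]: "f \<in> borel_measurable M" "g \<in> borel_measurable M"
    and "integrable M (\<lambda>x. (cmod (f x))\<^sup>2)" "integrable M (\<lambda>x. (cmod (g x))\<^sup>2)"
  shows "integrable M (\<lambda>x. f x * cnj (g x))"
proof (rule Bochner_Integration.integrable_bound)
  show "integrable M (\<lambda>x. (cmod (f x))\<^sup>2 + (cmod (g x))\<^sup>2)"
    using assms by simp
  show "(\<lambda>x. f x * cnj (g x)) \<in> borel_measurable M"
    by (intro borel_measurable_times borel_measurable_continuous_on[where f = cnj])
      (auto intro: continuous_intros)
  have "a * b \<le> a\<^sup>2 + b\<^sup>2" if "0 \<le> a" "0 \<le> b" for a b :: real
    using sum_squares_bound[of a b] mult_nonneg_nonneg[OF that] by linarith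
  then show "AE x in M. norm (f x * cnj (g x)) \<le> norm ((cmod (f x))\<^sup>2 + (cmod (g x))\<^sup>2)"
    by (simp add: norm_mult)
qed

section \<open>Linear independence\<close>

lemma L2_orthogonal_family_coeff_eq_0:
  fixes e :: "'i \<Rightarrow> (real^3) \<times> (real^3) \<Rightarrow> complex"
  assumes S: "finite S" "j \<in> S"
    and meas: "\<And>i. i \<in> S \<Longrightarrow> e i \<in> borel_measurable lborel"
    and square: "\<And>i. i \<in> S \<Longrightarrow> integrable lborel (\<lambda>x. (cmod (e i x))\<^sup>2)"
    and orth: "\<And>i. i \<in> S \<Longrightarrow> i \<noteq> j \<Longrightarrow> L2_inner (e i) (e j) = 0"
    and nonzero: "L2_nonzero (e j)"
    and zero: "AE x in lborel. (\<Sum>i\<in>S. c i * e i x) = 0"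
  shows "c j = 0"
proof -
  have integrable: "integrable lborel (\<lambda>x. c i * (e i x * cnj (e j x)))" if "i \<in> S" for i
    using integrable_mult_cnj[OF meas meas square square] that S(2) by simp
  have "(\<Sum>i\<in>S. c i * L2_inner (e i) (e j)) = (\<Sum>i\<in>S. \<integral>x. c i * (e i x * cnj (e j x)) \<partial>lborel)"
    by (simp add: L2_inner_def)
  also have "\<dots> = (\<integral>x. (\<Sum>i\<in>S. c i * (e i x * cnj (e j x))) \<partial>lborel)"
    using integrable by (rule Bochner_Integration.integral_sum[symmetric])
  also have "\<dots> = 0"
    using zero by (intro integral_eq_zero_AE) (auto simp: sum_distrib_right[symmetric] mult.assoc[symmetric])
  finally have "c j * L2_inner (e j) (e j) = 0"
    using S orth by (simp add: sum.remove)
  moreover have "L2_inner (e j) (e j) \<noteq> 0"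
  proof
    have "(\<lambda>x. e j x * cnj (e j x)) = (\<lambda>x. of_real ((cmod (e j x))\<^sup>2))"
      by (rule ext, rule complex_norm_square[symmetric])
    then have "L2_inner (e j) (e j) = of_real (\<integral>x. (cmod (e j x))\<^sup>2 \<partial>lborel)"
      unfolding L2_inner_def by (simp only: integral_complex_of_real)
    moreover assume "L2_inner (e j) (e j) = 0"
    ultimately have "AE x in lborel. (cmod (e j x))\<^sup>2 = 0"
      using integral_nonneg_eq_0_iff_AE[OF square[OF S(2)]] by simp
    then show False
      using nonzero by (simp add: L2_nonzero_def)
  qed
  ultimately show ?thesis by simp
qed

lemma H_half_hat_square_integrable:
  assumes "H_half_hat \<xi>"
  shows "\<xi> \<in> borel_measurable lborel" "integrable lborel (\<lambda>p. (cmod (\<xi> p))\<^sup>2)"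
proof -
  show [measurable]: "\<xi> \<in> borel_measurable lborel"
    using assms by (simp add: H_half_hat_def)
  show "integrable lborel (\<lambda>p. (cmod (\<xi> p))\<^sup>2)"
  proof (rule Bochner_Integration.integrable_bound)
    show "integrable lborel (\<lambda>p. (1 + (norm p)\<^sup>2) powr (1/2) * (cmod (\<xi> p))\<^sup>2)"
      using assms by (simp add: H_half_hat_def)
    show "(\<lambda>p. (cmod (\<xi> p))\<^sup>2) \<in> borel_measurable lborel"
      by measurable
    have "(cmod (\<xi> p))\<^sup>2 \<le> (1 + (norm p)\<^sup>2) powr (1/2) * (cmod (\<xi> p))\<^sup>2" for p
      using ge_one_powr_ge_zero[of "1 + (norm p)\<^sup>2" "1/2"] by (simp add: mult_le_cancel_right1)
    then show "AE p in lborel. norm ((cmod (\<xi> p))\<^sup>2) \<le> norm ((1 + (norm p)\<^sup>2) powr (1/2) * (cmod (\<xi> p))\<^sup>2)"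
      by (intro AE_I2) simp
  qed
qed

lemma sum_u_hat: "(\<Sum>i\<in>I. c i * u_hat lam (\<xi> i) m x) = u_hat lam (\<lambda>p. \<Sum>i\<in>I. c i * \<xi> i p) m x"
  unfolding u_hat_eq_kinetic_form
  by (simp only: sum_subtractf[symmetric] sum_divide_distrib times_divide_eq_right right_diff_distrib)

lemma sum_u_hat_group_by_lam:
  assumes "finite I"
  shows "(\<Sum>i\<in>I. c i * u_hat (lam i) (\<xi> i) m x) =
    (\<Sum>l\<in>lam ` I. u_hat l (\<lambda>p. \<Sum>i\<in>{i\<in>I. lam i = l}. c i * \<xi> i p) m x)"
proof -
  have "(\<Sum>i\<in>I. c i * u_hat (lam i) (\<xi> i) m x) =
      (\<Sum>l\<in>lam ` I. \<Sum>i\<in>{i\<in>I. lam i = l}. c i * u_hat (lam i) (\<xi> i) m x)"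
    by (rule sum.group[symmetric]) (use assms in auto)
  also have "\<dots> = (\<Sum>l\<in>lam ` I. \<Sum>i\<in>{i\<in>I. lam i = l}. c i * u_hat l (\<xi> i) m x)"
    by (intro sum.cong refl) auto
  finally show ?thesis
    by (simp only: sum_u_hat)
qed

lemma AE_u_hat_eq_0:
  assumes [measurable]: "\<xi> \<in> borel_measurable lborel" and zero: "AE p in lborel. \<xi> p = 0"
  shows "AE x in lborel. u_hat lam \<xi> m x = 0"
proof -
  have "AE x in lborel \<Otimes>\<^sub>M lborel. \<xi> (fst x) = 0 \<and> \<xi> (snd x) = 0"
  proof (rule lborel_pair.AE_pair_measure)
    show "{x \<in> space (lborel \<Otimes>\<^sub>M lborel). \<xi> (fst x) = 0 \<and> \<xi> (snd x) = 0} \<in> sets (lborel \<Otimes>\<^sub>M lborel)"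
      by measurable
    show "AE a in lborel. AE p in lborel. \<xi> (fst (a, p)) = 0 \<and> \<xi> (snd (a, p)) = 0"
      using zero by eventually_elim (use zero in \<open>auto elim: eventually_mono\<close>)
  qed
  then show ?thesis
    unfolding lborel_prod by eventually_elim (simp add: u_hat_eq_kinetic_form)
qed

lemma AE_sum_u_hat_eq_0_imp_AE_group_eq_0:
  fixes \<xi> :: "'i \<Rightarrow> real^3 \<Rightarrow> complex"
  assumes I: "finite I" and m: "m > 0" and lam: "\<And>i. i \<in> I \<Longrightarrow> lam i > 0"
    and meas: "\<And>i. i \<in> I \<Longrightarrow> \<xi> i \<in> borel_measurable lborel"
    and square: "\<And>i. i \<in> I \<Longrightarrow> integrable lborel (\<lambda>p. (cmod (\<xi> i p))\<^sup>2)"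
    and zero: "AE x in lborel. (\<Sum>i\<in>I. c i * u_hat (lam i) (\<xi> i) m x) = 0"
  shows "AE p in lborel. (\<Sum>i\<in>{i\<in>I. lam i = l}. c i * \<xi> i p) = 0"
proof -
  define W where "W p l = (\<Sum>i\<in>{i\<in>I. lam i = l}. c i * \<xi> i p)" for p l
  have "AE x in lborel \<Otimes>\<^sub>M lborel. (\<Sum>l\<in>lam ` I.
      (W (fst x) l - W (snd x) l) / of_real (kinetic_form (mu m) (fst x) (snd x) + l)) = 0"
    using zero unfolding lborel_prod sum_u_hat_group_by_lam[OF I]
    by eventually_elim (simp add: u_hat_eq_kinetic_form W_def)
  then have ae: "AE a in lborel. AE p in lborel.
      (\<Sum>l\<in>lam ` I. (W a l - W p l) / of_real (kinetic_form (mu m) a p + l)) = 0"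
    by (rule lborel_pair.AE_pair[where Q = "\<lambda>(a, p). _ a p", unfolded split_beta fst_conv snd_conv])
  obtain w where w: "AE p in lborel. \<forall>l\<in>lam ` I. W p l = w l"
    by (rule AE_partial_fraction_kinetic_form_eq_imp_constant[OF _ _ _ _ _ ae])
      (use mu_bounds[OF m] I lam in auto)
  show ?thesis
  proof (cases "l \<in> lam ` I")
    case True
    have square_W: "integrable lborel (\<lambda>p. (cmod (W p l))\<^sup>2)"
      unfolding W_def
      by (rule square_integrable_sum) (use I meas square in auto)
    have "AE p in lborel. W p l = w l"
      using w by eventually_elim (use True in blast)
    then show ?thesis
      unfolding W_def[symmetric] by (rule square_integrable_AE_eq_const_imp_AE_eq_0[OF square_W])
  next
    case False
    then show ?thesis
      by (intro AE_I2 sum.neutral) auto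
  qed
qed

lemma AE_sum_u_hat_eq_0_if_same_lam:
  assumes "finite I" and lam: "\<And>i. i \<in> I \<Longrightarrow> lam i = l"
    and meas: "\<And>i. i \<in> I \<Longrightarrow> \<xi> i \<in> borel_measurable lborel"
    and zero: "AE p in lborel. (\<Sum>i\<in>I. c i * \<xi> i p) = 0"
  shows "AE x in lborel. (\<Sum>i\<in>I. c i * u_hat (lam i) (\<xi> i) m x) = 0"
proof -
  have "(\<lambda>p. \<Sum>i\<in>I. c i * \<xi> i p) \<in> borel_measurable lborel"
    using assms(1) meas by (intro borel_measurable_sum borel_measurable_times) auto
  then have "AE x in lborel. u_hat l (\<lambda>p. \<Sum>i\<in>I. c i * \<xi> i p) m x = 0"
    using zero by (rule AE_u_hat_eq_0)
  moreover have "(\<Sum>i\<in>I. c i * u_hat (lam i) (\<xi> i) m x) = u_hat l (\<lambda>p. \<Sum>i\<in>I. c i * \<xi> i p) m x"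
    for x
    unfolding sum_u_hat[symmetric] using lam by (intro sum.cong) auto
  ultimately show ?thesis
    by simp
qed

theorem lemma11p1:
  fixes N :: nat and lam :: "nat \<Rightarrow> real" and xih :: "nat \<Rightarrow> real^3 \<Rightarrow> complex"
    and m m' :: real
  assumes lam_pos: "\<And>i. i < N \<Longrightarrow> lam i > 0"
    and xi_H: "\<And>i. i < N \<Longrightarrow> H_half_hat (xih i)"
    and m_pos: "m > 0"
    and nonzero: "\<And>i. i < N \<Longrightarrow> L2_nonzero (u_hat (lam i) (xih i) m)"
    and orth: "\<And>i j. i < N \<Longrightarrow> j < N \<Longrightarrow> i \<noteq> j \<Longrightarrow>
                  L2_inner (u_hat (lam i) (xih i) m) (u_hat (lam j) (xih j) m) = 0"
    and m'_pos: "m' > 0"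
    and close: "\<bar>m - m'\<bar> / (m' * (m + 1)) < 1"
  shows "L2_lin_indep N (\<lambda>i. u_hat (lam i) (xih i) m')"
  unfolding L2_lin_indep_def
proof (intro allI impI)
  fix c :: "nat \<Rightarrow> complex" and j
  assume zero: "AE x in lborel. (\<Sum>i<N. c i * u_hat (lam i) (xih i) m' x) = 0" and "j < N"
  have \<xi>: "xih i \<in> borel_measurable lborel" "integrable lborel (\<lambda>p. (cmod (xih i p))\<^sup>2)"
    if "i < N" for i
    using H_half_hat_square_integrable[OF xi_H[OF that]] by auto
  have u_measurable: "u_hat (lam i) (xih i) m \<in> borel_measurable lborel" if "i < N" for i
    by (rule borel_measurable_u_hat[OF \<xi>(1)[OF that]])
  have u_square: "integrable lborel (\<lambda>x. (cmod (u_hat (lam i) (xih i) m x))\<^sup>2)" if "i < N" for i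
    by (rule square_integrable_u_hat[OF m_pos lam_pos \<xi>, OF that that that])
  define I where "I = {i\<in>{..<N}. lam i = lam j}"
  have I: "finite I" "j \<in> I" "\<And>i. i \<in> I \<Longrightarrow> i < N" "\<And>i. i \<in> I \<Longrightarrow> lam i = lam j"
    using \<open>j < N\<close> by (auto simp: I_def)
  have zero_group: "AE p in lborel. (\<Sum>i\<in>I. c i * xih i p) = 0"
    unfolding I_def
    by (rule AE_sum_u_hat_eq_0_imp_AE_group_eq_0[OF _ m'_pos _ _ _ zero]) (use lam_pos \<xi> in auto)
  have zero_m: "AE x in lborel. (\<Sum>i\<in>I. c i * u_hat (lam i) (xih i) m x) = 0"
    by (rule AE_sum_u_hat_eq_0_if_same_lam[OF I(1) I(4) \<xi>(1)[OF I(3)] zero_group])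
  show "c j = 0"
  proof (rule L2_orthogonal_family_coeff_eq_0[OF I(1,2) _ _ _ _ zero_m])
    show "L2_nonzero (u_hat (lam j) (xih j) m)"
      using nonzero \<open>j < N\<close> .
  qed (use u_measurable u_square orth I(3) \<open>j < N\<close> in blast)+
qed

end
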